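(* Let $\Lambda\subseteq\mathbb Z^2$ be the lattice with generator matrix $$G=\begin{pmatrix} v_{11} & v_{12}\\ v_{21} & v_{22}\end{pmatrix}.$$ Assume $\Lambda$ induces a lattice tiling of the shape $\mathcal S\subset\mathbb Z^2$. Then the triple $(\Lambda,\mathcal S,\delta)$ defines a folding: <ul> <li>with $\delta=(+1,+1)$ if and only if $\gcd(v_{22}-v_{21},\,v_{11}-v_{12})=1$;</li> <li>with $\delta=(+1,-1)$ if and only if $\gcd(v_{22}+v_{21},\,v_{11}+v_{12})=1$;</li> <li>with $\delta=(+1,0)$ if and only if $\gcd(v_{12},v_{22})=1$;</li> <li>with $\delta=(0,+1)$ if and only if $\gcd(v_{11},v_{21})=1$.</li> </ul>
   Context: Let $D\ge 1$. A shape is a finite nonempty set $\mathcal S\subset\mathbb Z^D$ containing the origin; the origin is its distinguished center point. A lattice is a set $\Lambda=\{\sum_{j=1}^D u_jv_j : u_1,\dots,u_D\in\mathbb Z\}$ for linearly independent $v_1,\dots,v_D\in\mathbb Z^D$. The $D\times D$ matrix $G$ whose rows are $v_1,\dots,v_D$ is a generator matrix of $\Lambda$. $\Lambda$ induces a lattice tiling of $\mathcal S$ if the translates $\mathcal S+\lambda$, $\lambda\in\Lambda$, are pairwise disjoint and cover $\mathbb Z^D$. The translate $\mathcal S+\lambda$ is called the copy of $\mathcal S$ with center $\lambda$. For $x\in\mathbb Z^D$, $c(x)$ denotes the unique $\lambda\in\Lambda$ with $x\in\mathcal S+\lambda$. A ternary vector (direction) is a nonzero $\delta\in\{-1,0,+1\}^D$.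 The folded-row of $(\Lambda,\mathcal S,\delta)$ is the sequence $p_0,p_1,p_2,\dots$ defined by $p_0=0$ and $p_{k+1}=(p_k+\delta)-c(p_k+\delta)$. Equivalently, $p_{k+1}=p_k+\delta$ if $p_k+\delta\in\mathcal S$; otherwise $p_{k+1}$ is $p_k+\delta$ minus the center of the copy of $\mathcal S$ containing $p_k+\delta$. The triple $(\Lambda,\mathcal S,\delta)$ defines a folding if every element of $\mathcal S$ occurs in its folded-row. *)

theory Defs
  imports Main
begin

type_synonym pt = "int \<times> int"

definition padd :: "pt \<Rightarrow> pt \<Rightarrow> pt" where
  "padd x y = (fst x + fst y, snd x + snd y)"

definition psub :: "pt \<Rightarrow> pt \<Rightarrow> pt" where
  "psub x y = (fst x - fst y, snd x - snd y)"

definition is_shape :: "pt set \<Rightarrow> bool" where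
  "is_shape S \<longleftrightarrow> finite S \<and> S \<noteq> {} \<and> (0, 0) \<in> S"

text \<open>Lattice with generator matrix whose rows are v1 and v2.\<close>
definition lattice2 :: "pt \<Rightarrow> pt \<Rightarrow> pt set" where
  "lattice2 v1 v2 = {(u1 * fst v1 + u2 * fst v2, u1 * snd v1 + u2 * snd v2) | u1 u2 :: int. True}"

definition lin_indep2 :: "pt \<Rightarrow> pt \<Rightarrow> bool" where
  "lin_indep2 v1 v2 \<longleftrightarrow> fst v1 * snd v2 - snd v1 * fst v2 \<noteq> 0"

definition translate :: "pt set \<Rightarrow> pt \<Rightarrow> pt set" where
  "translate S l = (\<lambda>s. padd s l) ` S"

definition lattice_tiling :: "pt set \<Rightarrow> pt set \<Rightarrow> bool" where
  "lattice_tiling L S \<longleftrightarrow>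
     (\<forall>l\<in>L. \<forall>m\<in>L. l \<noteq> m \<longrightarrow> translate S l \<inter> translate S m = {}) \<and>
     (\<Union>l\<in>L. translate S l) = UNIV"

definition center :: "pt set \<Rightarrow> pt set \<Rightarrow> pt \<Rightarrow> pt" where
  "center L S x = (THE l. l \<in> L \<and> x \<in> translate S l)"

primrec folded_row :: "pt set \<Rightarrow> pt set \<Rightarrow> pt \<Rightarrow> nat \<Rightarrow> pt" where
  "folded_row L S d 0 = (0, 0)"
| "folded_row L S d (Suc k) =
     psub (padd (folded_row L S d k) d) (center L S (padd (folded_row L S d k) d))"

definition defines_folding :: "pt set \<Rightarrow> pt set \<Rightarrow> pt \<Rightarrow> bool" where
  "defines_folding L S d \<longleftrightarrow> S \<subseteq> range (folded_row L S d)"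

end

theory Submission
  imports Defs
begin

(*
  Let L be the lattice spanned by v1, v2 and d a ternary direction.
  The k-th point p_k of the folded-row lies in S and is congruent to k*d modulo L.
  Since S is a complete system of residues modulo L, the folded-row visits every
  element of S iff every point of Z^2 is congruent modulo L to some multiple of d,
  i.e. iff L + Zd = Z^2 (the residues k*d with k ranging over Z reduce to
  0 <= k < |det| because |det| * Z^2 is contained in L).

  For a primitive d, the functional phi_d(x) = d1*x2 - d2*x1 maps Z^2 onto Z with
  kernel exactly Zd, so L + Zd = Z^2 iff phi_d(L) = Z.  As phi_d(L) is generated by
  phi_d(v1) and phi_d(v2), Bezout's identity turns this into
  gcd(phi_d(v1), phi_d(v2)) = 1.  The four directions of the theorem are instances
  of this criterion.
*)

definition smul :: "int \<Rightarrow> pt \<Rightarrow> pt" where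
  "smul k x = (k * fst x, k * snd x)"

lemma lattice2_iff:
  "x \<in> lattice2 v1 v2 \<longleftrightarrow>
     (\<exists>u1 u2. fst x = u1 * fst v1 + u2 * fst v2 \<and> snd x = u1 * snd v1 + u2 * snd v2)"
  by (cases x) (auto simp: lattice2_def)

lemma lattice2_zero: "(0, 0) \<in> lattice2 v1 v2"
  unfolding lattice2_iff by (intro exI[of _ 0]) simp

lemma lattice2_padd:
  assumes "x \<in> lattice2 v1 v2" and "y \<in> lattice2 v1 v2"
  shows "padd x y \<in> lattice2 v1 v2"
proof -
  from assms obtain a1 a2 b1 b2 where
    "fst x = a1 * fst v1 + a2 * fst v2" "snd x = a1 * snd v1 + a2 * snd v2"
    "fst y = b1 * fst v1 + b2 * fst v2" "snd y = b1 * snd v1 + b2 * snd v2"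
    unfolding lattice2_iff by blast
  then show ?thesis unfolding lattice2_iff padd_def
    by (intro exI[of _ "a1 + b1"] exI[of _ "a2 + b2"]) (simp add: algebra_simps)
qed

lemma lattice2_psub:
  assumes "x \<in> lattice2 v1 v2" and "y \<in> lattice2 v1 v2"
  shows "psub x y \<in> lattice2 v1 v2"
proof -
  from assms obtain a1 a2 b1 b2 where
    "fst x = a1 * fst v1 + a2 * fst v2" "snd x = a1 * snd v1 + a2 * snd v2"
    "fst y = b1 * fst v1 + b2 * fst v2" "snd y = b1 * snd v1 + b2 * snd v2"
    unfolding lattice2_iff by blast
  then show ?thesis unfolding lattice2_iff psub_def
    by (intro exI[of _ "a1 - b1"] exI[of _ "a2 - b2"]) (simp add: algebra_simps)
qed

text \<open>A full-rank lattice contains the multiples of every point by its index |det|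
  (Cramer's rule); this bounds the multiples of a direction that matter.\<close>

lemma lattice2_contains_det_multiples:
  assumes "lin_indep2 v1 v2"
  obtains D where "D > 0" and "\<And>x. smul D x \<in> lattice2 v1 v2"
proof
  define det where "det = fst v1 * snd v2 - snd v1 * fst v2"
  show "\<bar>det\<bar> > 0" using assms by (simp add: lin_indep2_def det_def)
  fix x :: pt
  let ?s = "sgn det"
  show "smul \<bar>det\<bar> x \<in> lattice2 v1 v2"
    unfolding lattice2_iff smul_def
    by (rule exI[of _ "?s * (fst x * snd v2 - snd x * fst v2)"],
        rule exI[of _ "?s * (snd x * fst v1 - fst x * snd v1)"])
       (simp add: det_def abs_sgn algebra_simps)
qed

lemma mem_translate: "x \<in> translate S l \<longleftrightarrow> psub x l \<in> S"
proof
  assume "x \<in> translate S l"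
  then obtain s where "s \<in> S" "x = padd s l" by (auto simp: translate_def)
  then show "psub x l \<in> S" by (cases s, cases l) (simp add: padd_def psub_def)
next
  assume "psub x l \<in> S"
  moreover have "x = padd (psub x l) l" by (cases x, cases l) (simp add: padd_def psub_def)
  ultimately show "x \<in> translate S l" unfolding translate_def by blast
qed

lemma center_props:
  assumes tiling: "lattice_tiling L S"
  shows "center L S x \<in> L" and "psub x (center L S x) \<in> S"
proof -
  have disjoint: "\<And>l m. l \<in> L \<Longrightarrow> m \<in> L \<Longrightarrow> l \<noteq> m \<Longrightarrow> translate S l \<inter> translate S m = {}"
    and cover: "(\<Union>l\<in>L. translate S l) = UNIV"
    using tiling unfolding lattice_tiling_def by blast+
  have "x \<in> (\<Union>l\<in>L. translate S l)" using cover by simp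
  then obtain l where l: "l \<in> L" "x \<in> translate S l" by blast
  have unique: "m = l" if "m \<in> L" "x \<in> translate S m" for m
    using disjoint[OF that(1) l(1)] that(2) l(2) by blast
  have "center L S x = l"
    unfolding center_def using l unique by (intro the_equality) blast+
  then show "center L S x \<in> L" "psub x (center L S x) \<in> S"
    using l by (simp_all add: mem_translate)
qed

lemma shape_incongruent:
  assumes tiling: "lattice_tiling L S" and "(0, 0) \<in> L"
    and "s \<in> S" "t \<in> S" "psub s t \<in> L"
  shows "s = t"
proof (rule ccontr)
  assume "s \<noteq> t"
  then have "(0, 0) \<noteq> psub s t" by (cases s, cases t) (simp add: psub_def)
  moreover have "s \<in> translate S (0, 0)" "s \<in> translate S (psub s t)"
    using assms(3,4) by (cases s, cases t, simp_all add: mem_translate psub_def)+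
  ultimately show False using tiling assms(2,5) unfolding lattice_tiling_def by blast
qed

definition lattice_line_spans :: "pt set \<Rightarrow> pt \<Rightarrow> bool" where
  "lattice_line_spans L d \<longleftrightarrow> (\<forall>x. \<exists>k::int. psub x (smul k d) \<in> L)"

lemma folded_row_invariant:
  assumes tiling: "lattice_tiling (lattice2 v1 v2) S" and "(0, 0) \<in> S"
  shows "folded_row (lattice2 v1 v2) S d k \<in> S
       \<and> psub (folded_row (lattice2 v1 v2) S d k) (smul (int k) d) \<in> lattice2 v1 v2"
proof (induction k)
  case 0
  then show ?case using assms(2) lattice2_zero by (simp add: psub_def smul_def)
next
  case (Suc k)
  let ?L = "lattice2 v1 v2"
  define p where "p = folded_row ?L S d k"
  define c where "c = center ?L S (padd p d)"
  have "psub (psub p (smul (int k) d)) c \<in> ?L"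
    using Suc.IH center_props(1)[OF tiling] lattice2_psub by (simp add: p_def c_def)
  moreover have "psub (psub (padd p d) c) (smul (int (Suc k)) d)
               = psub (psub p (smul (int k) d)) c"
    by (simp add: psub_def padd_def smul_def algebra_simps)
  moreover have "psub (padd p d) c \<in> S"
    using center_props(2)[OF tiling] by (simp add: c_def)
  ultimately show ?case by (simp add: p_def c_def)
qed

lemma folding_iff_line_spans:
  assumes indep: "lin_indep2 v1 v2"
    and tiling: "lattice_tiling (lattice2 v1 v2) S" and S0: "(0, 0) \<in> S"
  shows "defines_folding (lattice2 v1 v2) S d \<longleftrightarrow> lattice_line_spans (lattice2 v1 v2) d"
proof
  let ?L = "lattice2 v1 v2"
  let ?p = "folded_row ?L S d"
  note row = folded_row_invariant[OF tiling S0]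
  assume folding: "defines_folding ?L S d"
  show "lattice_line_spans ?L d" unfolding lattice_line_spans_def
  proof
    fix x :: pt
    let ?c = "center ?L S x"
    obtain n where n: "psub x ?c = ?p n"
      using folding center_props(2)[OF tiling] unfolding defines_folding_def by blast
    have "padd (psub (?p n) (smul (int n) d)) ?c \<in> ?L"
      using row center_props(1)[OF tiling] lattice2_padd by blast
    also have "padd (psub (?p n) (smul (int n) d)) ?c = psub x (smul (int n) d)"
      unfolding n[symmetric] by (simp add: psub_def padd_def smul_def)
    finally show "\<exists>k::int. psub x (smul k d) \<in> ?L" by blast
  qed
next
  let ?L = "lattice2 v1 v2"
  let ?p = "folded_row ?L S d"
  note row = folded_row_invariant[OF tiling S0]
  obtain D where D: "D > 0" "\<And>x. smul D x \<in> ?L"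
    using lattice2_contains_det_multiples[OF indep] by blast
  assume spans: "lattice_line_spans ?L d"
  show "defines_folding ?L S d" unfolding defines_folding_def
  proof
    fix s assume s: "s \<in> S"
    obtain k where k: "psub s (smul k d) \<in> ?L"
      using spans unfolding lattice_line_spans_def by blast
    define n where "n = nat (k mod D)"
    have "padd (psub s (smul k d)) (smul D (smul (k div D) d)) \<in> ?L"
      using k D(2) lattice2_padd by blast
    also have "padd (psub s (smul k d)) (smul D (smul (k div D) d)) = psub s (smul (int n) d)"
    proof -
      have "k = int n + D * (k div D)"
        using D(1) div_mult_mod_eq[of k D] by (simp add: n_def algebra_simps)
      then have "k * z = (int n + D * (k div D)) * z" for z by simp
      then have "k * z = int n * z + D * (k div D * z)" for z
        by (simp only: distrib_right mult.assoc)
      then show ?thesis by (simp add: psub_def padd_def smul_def)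
    qed
    finally have "psub (psub s (smul (int n) d)) (psub (?p n) (smul (int n) d)) \<in> ?L"
      using row lattice2_psub by blast
    then have "psub s (?p n) \<in> ?L" by (simp add: psub_def)
    then have "s = ?p n" using shape_incongruent[OF tiling lattice2_zero s] row by blast
    then show "s \<in> range ?p" by blast
  qed
qed

definition annihilator :: "pt \<Rightarrow> pt \<Rightarrow> int" where
  "annihilator d x = fst d * snd x - snd d * fst x"

lemma generate_all_iff_coprime:
  "(\<forall>n::int. \<exists>u1 u2. n = u1 * a + u2 * b) \<longleftrightarrow> gcd a b = 1"
proof
  assume "\<forall>n::int. \<exists>u1 u2. n = u1 * a + u2 * b"
  then obtain u1 u2 where "1 = u1 * a + u2 * b" by blast
  moreover have "gcd a b dvd u1 * a + u2 * b" by simp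
  ultimately show "gcd a b = 1" by (metis is_unit_gcd_iff)
next
  assume "gcd a b = 1"
  then obtain x y where xy: "x * a + y * b = 1" using bezout_int by metis
  show "\<forall>n::int. \<exists>u1 u2. n = u1 * a + u2 * b"
  proof
    fix n :: int
    have "n = (n * x) * a + (n * y) * b" using xy by (metis mult.assoc distrib_left mult_1_right)
    then show "\<exists>u1 u2. n = u1 * a + u2 * b" by blast
  qed
qed

lemma annihilator_kernel:
  assumes "gcd (fst d) (snd d) = 1" and "annihilator d y = 0"
  obtains k where "y = smul k d"
proof -
  obtain w1 w2 where w: "w1 * fst d + w2 * snd d = 1"
    using bezout_int[of "fst d" "snd d"] assms(1) by auto
  have y0: "fst d * snd y = snd d * fst y" using assms(2) by (simp add: annihilator_def)
  let ?k = "w1 * fst y + w2 * snd y"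
  have "fst y = ?k * fst d"
    using arg_cong[OF w, of "\<lambda>t. t * fst y"] y0 by (simp add: algebra_simps)
  moreover have "snd y = ?k * snd d"
    using arg_cong[OF w, of "\<lambda>t. t * snd y"] y0 by (simp add: algebra_simps)
  ultimately show thesis by (intro that[of ?k]) (simp add: smul_def prod_eq_iff)
qed

lemma line_spans_iff_coprime:
  assumes prim: "gcd (fst d) (snd d) = 1"
  shows "lattice_line_spans (lattice2 v1 v2) d
     \<longleftrightarrow> gcd (annihilator d v1) (annihilator d v2) = 1"
proof -
  let ?L = "lattice2 v1 v2"
  have linear: "annihilator d x = u1 * annihilator d v1 + u2 * annihilator d v2"
    if "fst x = u1 * fst v1 + u2 * fst v2" "snd x = u1 * snd v1 + u2 * snd v2" for x u1 u2
    using that by (simp add: annihilator_def algebra_simps)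
  have shift: "annihilator d (psub x (smul k d)) = annihilator d x" for x k
    by (simp add: annihilator_def psub_def smul_def algebra_simps)
  have "lattice_line_spans ?L d
     \<longleftrightarrow> (\<forall>n. \<exists>u1 u2. n = u1 * annihilator d v1 + u2 * annihilator d v2)"
  proof
    assume spans: "lattice_line_spans ?L d"
    show "\<forall>n. \<exists>u1 u2. n = u1 * annihilator d v1 + u2 * annihilator d v2"
    proof
      fix n :: int
      obtain w1 w2 where w: "w1 * fst d + w2 * snd d = 1"
        using bezout_int[of "fst d" "snd d"] prim by auto
      have "annihilator d (- n * w2, n * w1) = n"
        using arg_cong[OF w, of "(*) n"] by (simp add: annihilator_def algebra_simps)
      moreover obtain k where "psub (- n * w2, n * w1) (smul k d) \<in> ?L"
        using spans unfolding lattice_line_spans_def by blast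
      ultimately show "\<exists>u1 u2. n = u1 * annihilator d v1 + u2 * annihilator d v2"
        using linear shift unfolding lattice2_iff by metis
    qed
  next
    assume onto: "\<forall>n. \<exists>u1 u2. n = u1 * annihilator d v1 + u2 * annihilator d v2"
    show "lattice_line_spans ?L d" unfolding lattice_line_spans_def
    proof
      fix x :: pt
      obtain u1 u2 where u: "annihilator d x = u1 * annihilator d v1 + u2 * annihilator d v2"
        using onto by blast
      define l where "l = (u1 * fst v1 + u2 * fst v2, u1 * snd v1 + u2 * snd v2)"
      have l: "l \<in> ?L" unfolding l_def lattice2_iff by auto
      have "annihilator d (psub x l) = 0"
        using u linear[of l u1 u2] by (simp add: l_def annihilator_def psub_def algebra_simps)
      then obtain k where "psub x l = smul k d" using annihilator_kernel[OF prim] by blast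
      then have "psub x (smul k d) = l" by (auto simp: psub_def smul_def prod_eq_iff)
      then show "\<exists>k. psub x (smul k d) \<in> ?L" using l by metis
    qed
  qed
  then show ?thesis using generate_all_iff_coprime by simp
qed

lemma folding_iff_coprime:
  assumes "lin_indep2 v1 v2" "is_shape S" "lattice_tiling (lattice2 v1 v2) S"
    and "gcd (fst d) (snd d) = 1"
  shows "defines_folding (lattice2 v1 v2) S d
     \<longleftrightarrow> gcd (annihilator d v1) (annihilator d v2) = 1"
  using folding_iff_line_spans[OF assms(1,3)] line_spans_iff_coprime[OF assms(4)] assms(2)
  by (simp add: is_shape_def)

theorem mainTheorem4:
  fixes v11 v12 v21 v22 :: int and S :: "pt set"
  assumes "lin_indep2 (v11, v12) (v21, v22)"
    and "is_shape S"
    and "lattice_tiling (lattice2 (v11, v12) (v21, v22)) S"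
  shows "(defines_folding (lattice2 (v11, v12) (v21, v22)) S (1, 1)
            \<longleftrightarrow> gcd (v22 - v21) (v11 - v12) = 1)
       \<and> (defines_folding (lattice2 (v11, v12) (v21, v22)) S (1, -1)
            \<longleftrightarrow> gcd (v22 + v21) (v11 + v12) = 1)
       \<and> (defines_folding (lattice2 (v11, v12) (v21, v22)) S (1, 0)
            \<longleftrightarrow> gcd v12 v22 = 1)
       \<and> (defines_folding (lattice2 (v11, v12) (v21, v22)) S (0, 1)
            \<longleftrightarrow> gcd v11 v21 = 1)"
proof -
  note criterion = folding_iff_coprime[OF assms]
  have "defines_folding (lattice2 (v11, v12) (v21, v22)) S (1, 1)
     \<longleftrightarrow> gcd (v12 - v11) (v22 - v21) = 1"
    using criterion[of "(1, 1)"] by (simp add: annihilator_def)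
  moreover have "gcd (v12 - v11) (v22 - v21) = gcd (v22 - v21) (v11 - v12)"
    by (metis gcd.commute gcd_neg2_int minus_diff_eq)
  moreover have "defines_folding (lattice2 (v11, v12) (v21, v22)) S (1, -1)
     \<longleftrightarrow> gcd (v12 + v11) (v22 + v21) = 1"
    using criterion[of "(1, -1)"] by (simp add: annihilator_def)
  moreover have "gcd (v12 + v11) (v22 + v21) = gcd (v22 + v21) (v11 + v12)"
    by (simp add: gcd.commute add.commute)
  moreover have "defines_folding (lattice2 (v11, v12) (v21, v22)) S (1, 0)
     \<longleftrightarrow> gcd v12 v22 = 1"
    using criterion[of "(1, 0)"] by (simp add: annihilator_def)
  moreover have "defines_folding (lattice2 (v11, v12) (v21, v22)) S (0, 1)
     \<longleftrightarrow> gcd v11 v21 = 1"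
    using criterion[of "(0, 1)"] by (simp add: annihilator_def)
  ultimately show ?thesis by argo
qed

end
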